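(* Let $Z$ and $X$ be as in the context. Then $Z^{-1}=XZX$. In particular, $Z^{-1}\in\mathcal{DR}_0$.
   Context: $\mathbf N=\{1,2,\dots\}$. For $k,m\in\mathbf N$, $\alpha_k(m)$ is the number of $k$-tuples $(m_1,\dots,m_k)$ of integers $\ge2$ with $m_1\cdots m_k=m$. The divisor matrix $D=(d_{i,j})_{i,j\in\mathbf N}$ has $d_{i,j}=1$ if $i\mid j$ and $0$ otherwise. $Z=(\alpha(i,j))_{i,j\in\mathbf N}$ is the matrix whose odd-indexed rows have a single nonzero entry, equal to $1$, on the diagonal, and whose $i$-th row, for $i=2^kd$ with $d$ odd and $k\ge1$, equals the $d$-th row of $(D-I)^k$ (equivalently $\alpha(i,j)=\alpha_k(j/d)$ if $d\mid j$ and $0$ otherwise). $Z$ is upper unitriangular. $v_2(i)$ is the exponent of $2$ in $i$, and $X$ is the diagonal matrix with $(i,i)$ entry $(-1)^{v_2(i)}$. $\mathcal{DR}_0$ is the set of $\mathbf N\times\mathbf N$ complex matrices $A=(a_{i,j})$ for which there exist positive constants $C,c$ with $a_{i,j}=0$ whenever $i>Cj^c$ and $|a_{i,j}|\le Cj^c$ for all $i,j$. *)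

theory Defs
  imports "HOL-Analysis.Analysis" "HOL-Computational_Algebra.Primes"
begin

(* N x N complex matrices, represented as functions nat => nat => complex;
   only indices >= 1 are meaningful. *)
type_synonym cmat = "nat \<Rightarrow> nat \<Rightarrow> complex"

definition v2 :: "nat \<Rightarrow> nat" where
  "v2 i = multiplicity (2::nat) i"

definition alpha_k :: "nat \<Rightarrow> nat \<Rightarrow> nat" where
  "alpha_k k m = card {xs :: nat list. length xs = k \<and> (\<forall>x\<in>set xs. 2 \<le> x) \<and> prod_list xs = m}"

definition Zmat :: cmat where
  "Zmat i j = (let d = i div 2 ^ v2 i in
      if d dvd j then of_nat (alpha_k (v2 i) (j div d)) else 0)"

definition Xmat :: cmat where
  "Xmat i j = (if i = j then (-1) ^ v2 i else 0)"

definition Imat :: cmat where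
  "Imat i j = (if i = j then 1 else 0)"

definition mmult :: "cmat \<Rightarrow> cmat \<Rightarrow> cmat" (infixl "\<odot>" 70) where
  "(A \<odot> B) i j = infsum (\<lambda>k. A i k * B k j) {1..}"

definition mat_eq :: "cmat \<Rightarrow> cmat \<Rightarrow> bool" where
  "mat_eq A B \<longleftrightarrow> (\<forall>i\<ge>1. \<forall>j\<ge>1. A i j = B i j)"

definition DR0 :: "cmat set" where
  "DR0 = {A. \<exists>C c :: real. C > 0 \<and> c > 0 \<and>
      (\<forall>i\<ge>1. \<forall>j\<ge>1. real i > C * real j powr c \<longrightarrow> A i j = 0) \<and>
      (\<forall>i\<ge>1. \<forall>j\<ge>1. cmod (A i j) \<le> C * real j powr c)}"

end

theory Submission
  imports Defs
begin

(*
  Read row i = 2^k d (d odd) of Z as the Dirichlet series d^-s (zeta(s) - 1)^k, and let Phi be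
  the ring endomorphism of formal Dirichlet series that fixes p^-s for every odd prime p and
  sends 2^-s to 1 - zeta(s).  Then Phi(n^-s) = (-1)^(v_2 n) * (row n of Z), so the rows of ZXZ
  are the images under Phi of the rows of Z, and ZXZ = X, which is equivalent to Z^-1 = XZX,
  says Phi(d^-s (zeta - 1)^k) = d^-s (-2^-s)^k.  This follows from Phi(zeta) = 1 - 2^-s:
  writing eta = sum over odd n of n^-s = (1 - 2^-s) zeta, the splitting of n into odd part and
  power of 2 gives Phi(zeta) = eta / zeta.  Everything is carried out on coefficients, so no
  convergence questions arise.  Membership in DR_0 follows from Z being upper triangular with
  alpha_k(m) <= m^2, a consequence of the sum over c >= 2 of 1/c^2 being less than 1.
*)

section \<open>Odd part and 2-adic sign\<close>

definition odd_part :: "nat \<Rightarrow> nat" where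
  "odd_part n = n div 2 ^ v2 n"

lemma odd_part_times_pow2: "odd_part n * 2 ^ v2 n = n"
  unfolding odd_part_def v2_def using multiplicity_dvd[of "2::nat" n] by simp

lemma odd_part_pos: "n > 0 \<Longrightarrow> odd_part n > 0"
  using odd_part_times_pow2[of n] by (metis gr0I mult_0)

lemma odd_odd_part: "n > 0 \<Longrightarrow> odd (odd_part n)"
  unfolding odd_part_def v2_def using multiplicity_decompose[where p="2::nat" and x=n] by simp

lemma v2_mult: "m > 0 \<Longrightarrow> n > 0 \<Longrightarrow> v2 (m * n) = v2 m + v2 n"
  unfolding v2_def by (rule prime_elem_multiplicity_mult_distrib) auto

lemma v2_eq_0_if_odd: "odd n \<Longrightarrow> v2 n = 0"
  unfolding v2_def by (rule not_dvd_imp_multiplicity_0) auto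

lemma v2_double: "n > 0 \<Longrightarrow> v2 (2 * n) = Suc (v2 n)"
  unfolding v2_def by (rule multiplicity_times_same) auto

lemma odd_part_eq_self_if_odd: "odd n \<Longrightarrow> odd_part n = n"
  unfolding odd_part_def using v2_eq_0_if_odd by simp

lemma odd_part_mult:
  assumes "m > 0" "n > 0"
  shows "odd_part (m * n) = odd_part m * odd_part n"
proof -
  have "odd_part (m * n) * 2 ^ v2 (m * n) = (odd_part m * 2 ^ v2 m) * (odd_part n * 2 ^ v2 n)"
    by (simp add: odd_part_times_pow2)
  also have "\<dots> = (odd_part m * odd_part n) * 2 ^ v2 (m * n)"
    by (simp add: v2_mult[OF assms] power_add)
  finally show ?thesis by simp
qed

lemma odd_part_double: "n > 0 \<Longrightarrow> odd_part (2 * n) = odd_part n"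
  using odd_part_mult[of 2 n] odd_part_eq_self_if_odd[of 1] v2_double[of 1]
  by (simp add: odd_part_def)

definition sign2 :: "nat \<Rightarrow> int" where
  "sign2 n = (-1) ^ v2 n"

lemma sign2_odd: "odd n \<Longrightarrow> sign2 n = 1"
  unfolding sign2_def by (simp add: v2_eq_0_if_odd)

lemma sign2_mult: "m > 0 \<Longrightarrow> n > 0 \<Longrightarrow> sign2 (m * n) = sign2 m * sign2 n"
  unfolding sign2_def by (simp add: v2_mult power_add)

lemma abs_sign2: "\<bar>sign2 n\<bar> = 1"
  unfolding sign2_def by (simp add: power_abs)

lemma of_int_sign2_square: "of_int (sign2 n) * of_int (sign2 n) = (1 :: 'a :: ring_1)"
  unfolding sign2_def by (simp flip: power_add mult_2 add: power_mult)

lemma cofactor_even_iff: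
  assumes "j > (0::nat)"
  shows "d dvd j \<and> even (j div d) \<longleftrightarrow> even j \<and> d dvd j div 2"
proof
  assume "d dvd j \<and> even (j div d)"
  then obtain r where "j = d * (2 * r)"
    by (metis dvd_mult_div_cancel evenE)
  then have "j = 2 * (d * r)" by simp
  then show "even j \<and> d dvd j div 2" by simp
next
  assume "even j \<and> d dvd j div 2"
  then obtain s where s: "j = 2 * (d * s)"
    by (metis dvd_mult_div_cancel dvdE)
  with assms have "d > 0" by (cases d) auto
  with s have "j div d = 2 * s" by simp
  with s show "d dvd j \<and> even (j div d)" by simp
qed

lemma sum_odd_divisors:
  fixes f :: "nat \<Rightarrow> 'a :: ab_group_add"
  assumes "j > 0"
  shows "(\<Sum>c | odd c \<and> c dvd j. f (j div c))
       = (\<Sum>d | d dvd j. f d) - (if even j then \<Sum>d | d dvd j div 2. f d else 0)"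
proof -
  have fin: "finite {d. d dvd j}" using assms by simp
  have "(\<Sum>c | odd c \<and> c dvd j. f (j div c)) = (\<Sum>d | d dvd j \<and> odd (j div d). f d)"
  proof (rule sum.reindex_bij_witness[of _ "\<lambda>d. j div d" "\<lambda>c. j div c"])
    show "j div (j div d) = d" if "d \<in> {d. d dvd j \<and> odd (j div d)}" for d
      using that assms by (auto elim!: dvdE)
    show "j div (j div c) = c" if "c \<in> {c. odd c \<and> c dvd j}" for c
      using that assms by (auto elim!: dvdE)
  qed (use assms in \<open>auto elim!: dvdE\<close>)
  moreover have "(\<Sum>d | d dvd j. f d)
      = (\<Sum>d | d dvd j \<and> odd (j div d). f d) + (\<Sum>d | d dvd j \<and> even (j div d). f d)"
    using sum.Int_Diff[OF fin, of f "{d. odd (j div d)}"]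
    by (simp add: Int_def set_diff_eq conj_commute)
  moreover have "{d. d dvd j \<and> even (j div d)} = (if even j then {d. d dvd j div 2} else {})"
    using cofactor_even_iff[OF assms] by auto
  ultimately show ?thesis by (simp add: algebra_simps)
qed

lemma multiples_atLeastAtMost:
  assumes "d > (0::nat)"
  shows "{n \<in> {1..j}. d dvd n} = (*) d ` {1..j div d}"
proof (intro equalityI subsetI)
  fix n assume "n \<in> {n \<in> {1..j}. d dvd n}"
  then obtain c where n: "n = d * c" "1 \<le> n" "n \<le> j" by auto
  then have "c \<ge> 1" by (cases c) auto
  moreover have "c \<le> j div d"
    using div_le_mono[OF n(3), of d] assms n(1) by simp
  ultimately show "n \<in> (*) d ` {1..j div d}" using n by auto
next
  fix n assume "n \<in> (*) d ` {1..j div d}"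
  then obtain c where "c \<in> {1..j div d}" "n = d * c" by blast
  then have c: "n = d * c" "1 \<le> c" "c \<le> j div d" by simp_all
  then have "d * c \<le> d * (j div d)" by simp
  also have "\<dots> \<le> j" by simp
  finally show "n \<in> {n \<in> {1..j}. d dvd n}" using c assms by simp
qed

lemma sum_multiples_atLeastAtMost:
  fixes d :: nat
  assumes "d > 0"
  shows "(\<Sum>n\<in>{n \<in> {1..j}. d dvd n}. f n) = (\<Sum>c=1..j div d. f (d * c))"
  unfolding multiples_atLeastAtMost[OF assms] using assms by (simp add: sum.reindex inj_on_def)

definition proper_divisors :: "nat \<Rightarrow> nat set" where
  "proper_divisors n = {d. d dvd n \<and> d < n}"

lemma finite_proper_divisors [simp]: "finite (proper_divisors n)"
  unfolding proper_divisors_def by (rule finite_subset[of _ "{..<n}"]) auto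

section \<open>Ordered factorisations\<close>

definition ordered_factorisations :: "nat \<Rightarrow> nat \<Rightarrow> nat list set" where
  "ordered_factorisations k n = {xs. length xs = k \<and> (\<forall>x\<in>set xs. 2 \<le> x) \<and> prod_list xs = n}"

lemma alpha_k_eq_card: "alpha_k k n = card (ordered_factorisations k n)"
  unfolding alpha_k_def ordered_factorisations_def ..

lemma two_pow_length_le_prod_list:
  "(\<forall>x\<in>set xs. 2 \<le> x) \<Longrightarrow> 2 ^ length xs \<le> prod_list (xs :: nat list)"
  by (induction xs) (auto intro: mult_le_mono)

lemma member_le_prod_list:
  "\<forall>y\<in>set xs. 2 \<le> y \<Longrightarrow> x \<in> set xs \<Longrightarrow> x \<le> prod_list (xs :: nat list)"
proof (induction xs)
  case (Cons a xs)
  have "1 \<le> prod_list xs"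
    using two_pow_length_le_prod_list[of xs] Cons.prems(1)
    by (metis list.set_intros(2) one_le_numeral one_le_power order.trans)
  moreover have "1 \<le> a" using Cons.prems by auto
  ultimately show ?case
    using Cons by (auto intro: order_trans[OF _ mult_le_mono1[of 1 a]])
qed simp

lemma finite_ordered_factorisations: "finite (ordered_factorisations k n)"
proof (rule finite_subset)
  show "ordered_factorisations k n \<subseteq> {xs. set xs \<subseteq> {..n} \<and> length xs = k}"
    unfolding ordered_factorisations_def using member_le_prod_list by fastforce
qed (rule finite_lists_length_eq, simp)

lemma alpha_k_nonzero_imp_le: "alpha_k k n \<noteq> 0 \<Longrightarrow> 2 ^ k \<le> n"
proof -
  assume "alpha_k k n \<noteq> 0"
  then obtain xs where "xs \<in> ordered_factorisations k n"
    unfolding alpha_k_eq_card by (metis card.empty ex_in_conv)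
  then show ?thesis
    unfolding ordered_factorisations_def using two_pow_length_le_prod_list by auto
qed

lemma alpha_k_eq_0_if_less: "n < 2 ^ k \<Longrightarrow> alpha_k k n = 0"
  using alpha_k_nonzero_imp_le by force

lemma alpha_k_0: "alpha_k 0 n = (if n = 1 then 1 else 0)"
proof -
  have "ordered_factorisations 0 n = (if n = 1 then {[]} else {})"
    unfolding ordered_factorisations_def by auto
  then show ?thesis unfolding alpha_k_eq_card by simp
qed

lemma ordered_factorisations_Suc:
  "ordered_factorisations (Suc k) n
     = (\<Union>d\<in>proper_divisors n. (#) (n div d) ` ordered_factorisations k d)"
proof (intro equalityI subsetI)
  fix xs assume "xs \<in> ordered_factorisations (Suc k) n"
  then obtain x ys where xs: "xs = x # ys"
    unfolding ordered_factorisations_def by (cases xs) auto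
  with \<open>xs \<in> _\<close> have x: "2 \<le> x" and n: "n = x * prod_list ys"
    and ys: "ys \<in> ordered_factorisations k (prod_list ys)"
    unfolding ordered_factorisations_def by auto
  have "2 ^ length ys \<le> prod_list ys"
    using ys two_pow_length_le_prod_list[of ys] unfolding ordered_factorisations_def by simp
  then have "1 \<le> prod_list ys"
    using one_le_power[of "2::nat" "length ys"] by linarith
  then have "prod_list ys < n" "n div prod_list ys = x"
    using x unfolding n by simp_all
  then have "prod_list ys \<in> proper_divisors n" "n div prod_list ys = x"
    unfolding proper_divisors_def n by simp_all
  then show "xs \<in> (\<Union>d\<in>proper_divisors n. (#) (n div d) ` ordered_factorisations k d)"
    using xs ys by force
next
  fix xs assume "xs \<in> (\<Union>d\<in>proper_divisors n. (#) (n div d) ` ordered_factorisations k d)"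
  then obtain d ys where d: "d dvd n" "d < n" and ys: "ys \<in> ordered_factorisations k d"
    and xs: "xs = n div d # ys"
    unfolding proper_divisors_def by auto
  obtain q where q: "n = d * q" using d(1) ..
  have "d \<noteq> 0" "q \<noteq> 0" "q \<noteq> 1" using d(2) unfolding q by auto
  then have "n div d \<ge> 2" "n div d * d = n" unfolding q by simp_all
  then show "xs \<in> ordered_factorisations (Suc k) n"
    using ys xs unfolding ordered_factorisations_def by auto
qed

lemma alpha_k_Suc: "alpha_k (Suc k) n = (\<Sum>d\<in>proper_divisors n. alpha_k k d)"
proof -
  have "alpha_k (Suc k) n
      = (\<Sum>d\<in>proper_divisors n. card ((#) (n div d) ` ordered_factorisations k d))"
    unfolding alpha_k_eq_card ordered_factorisations_Suc
  proof (rule card_UN_disjoint)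
    show "\<forall>i\<in>proper_divisors n. \<forall>j\<in>proper_divisors n. i \<noteq> j \<longrightarrow>
        (#) (n div i) ` ordered_factorisations k i \<inter> (#) (n div j) ` ordered_factorisations k j = {}"
      unfolding ordered_factorisations_def by auto
  qed (simp_all add: finite_ordered_factorisations)
  also have "\<dots> = (\<Sum>d\<in>proper_divisors n. alpha_k k d)"
    by (simp add: alpha_k_eq_card card_image)
  finally show ?thesis .
qed

lemma alpha_k_add_alpha_k_Suc:
  assumes "n > 0"
  shows "int (alpha_k k n) + int (alpha_k (Suc k) n) = (\<Sum>d | d dvd n. int (alpha_k k d))"
proof -
  have "{d. d dvd n} = insert n (proper_divisors n)" "n \<notin> proper_divisors n"
    using assms by (auto simp: proper_divisors_def dvd_imp_le le_neq_implies_less)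
  then show ?thesis by (simp add: alpha_k_Suc of_nat_sum)
qed

lemma sum_inverse_consecutive_products:
  assumes "n \<ge> 1"
  shows "(\<Sum>c=2..n. 1 / (real c * (real c - 1))) = 1 - 1 / real n"
  using assms
proof (induction n rule: dec_induct)
  case (step n)
  have "1 / (real (Suc n) * (real (Suc n) - 1)) = 1 / real n - 1 / real (Suc n)"
    using step.hyps(1) by (simp add: field_simps)
  with step.IH show ?case by (simp add: sum.cl_ivl_Suc)
qed simp

lemma sum_proper_divisors_square_le: "(\<Sum>d\<in>proper_divisors n. real d ^ 2) \<le> real n ^ 2"
proof (cases "n = 0")
  case True
  then show ?thesis by (simp add: proper_divisors_def)
next
  case False
  have cofactor: "n div d \<in> {2..n} \<and> n div (n div d) = d" if "d \<in> proper_divisors n" for d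
  proof -
    from that have "d dvd n" unfolding proper_divisors_def by simp
    then obtain q where q: "n = d * q" ..
    have "d \<noteq> 0" "q \<noteq> 0" "q \<noteq> 1" using that False unfolding q proper_divisors_def by auto
    then show ?thesis unfolding q by simp
  qed
  then have inj: "inj_on (\<lambda>d. n div d) (proper_divisors n)"
    by (metis inj_onI)
  have "(\<Sum>d\<in>proper_divisors n. real d ^ 2)
      = (\<Sum>c\<in>(\<lambda>d. n div d) ` proper_divisors n. real (n div c) ^ 2)"
    using cofactor by (simp add: sum.reindex[OF inj])
  also have "\<dots> \<le> (\<Sum>c=2..n. real (n div c) ^ 2)"
    using cofactor by (intro sum_mono2) auto
  also have "\<dots> \<le> (\<Sum>c=2..n. real n ^ 2 * (1 / (real c * (real c - 1))))"
  proof (rule sum_mono)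
    fix c assume c: "c \<in> {2..n}"
    have "real (n div c) * real c \<le> real n"
      by (metis div_times_less_eq_dividend of_nat_le_iff of_nat_mult)
    then have "real (n div c) \<le> real n / real c" using c by (simp add: field_simps)
    then have "real (n div c) ^ 2 \<le> (real n / real c) ^ 2" by (intro power_mono) auto
    also have "\<dots> \<le> real n ^ 2 * (1 / (real c * (real c - 1)))"
      using c by (simp add: power2_eq_square field_simps mult_left_mono)
    finally show "real (n div c) ^ 2 \<le> real n ^ 2 * (1 / (real c * (real c - 1)))" .
  qed
  also have "\<dots> = real n ^ 2 * (1 - 1 / real n)"
    using False sum_inverse_consecutive_products[of n] by (simp only: sum_distrib_left[symmetric])
  also have "\<dots> \<le> real n ^ 2" by (simp add: field_simps)
  finally show ?thesis .
qed

lemma alpha_k_le_square: "real (alpha_k k n) \<le> real n ^ 2"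
proof (induction k arbitrary: n)
  case 0
  then show ?case by (simp add: alpha_k_0)
next
  case (Suc k)
  have "real (alpha_k (Suc k) n) = (\<Sum>d\<in>proper_divisors n. real (alpha_k k d))"
    by (simp add: alpha_k_Suc)
  also have "\<dots> \<le> (\<Sum>d\<in>proper_divisors n. real d ^ 2)"
    by (intro sum_mono Suc.IH)
  also have "\<dots> \<le> real n ^ 2"
    by (rule sum_proper_divisors_square_le)
  finally show ?case .
qed

section \<open>Coefficients of the substitution\<close>

text \<open>The \<open>j\<close>-th coefficient of \<open>d^-s (zeta(s) - 1)^k\<close>.\<close>
definition zeta_row :: "nat \<Rightarrow> nat \<Rightarrow> nat \<Rightarrow> nat" where
  "zeta_row k d j = (if d dvd j then alpha_k k (j div d) else 0)"

lemma zeta_row_nonzero_imp_le: "zeta_row k d j \<noteq> 0 \<Longrightarrow> 2 ^ k * d \<le> j"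
  unfolding zeta_row_def
  by (metis alpha_k_nonzero_imp_le dvd_div_mult_self mult_le_mono1)

lemma zeta_row_eq_0_if_less: "j < 2 ^ k * d \<Longrightarrow> zeta_row k d j = 0"
  using zeta_row_nonzero_imp_le by force

lemma zeta_row_mult:
  "a > 0 \<Longrightarrow> zeta_row k (a * b) j = (if a dvd j then zeta_row k b (j div a) else 0)"
  unfolding zeta_row_def by (auto simp: div_mult2_eq dvd_div_iff_mult mult.commute
      intro: dvd_mult_left)

text \<open>The \<open>j\<close>-th coefficient of \<open>(zeta(s) - 1)^k (1 - 2^-s)\<close>.\<close>
definition alpha_minus_half :: "nat \<Rightarrow> nat \<Rightarrow> int" where
  "alpha_minus_half k j = int (alpha_k k j) - (if even j then int (alpha_k k (j div 2)) else 0)"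

lemma zeta_row_minus_half:
  assumes "odd a"
  shows "(if a dvd j then alpha_minus_half k (j div a) else 0)
       = int (zeta_row k a j) - (if even j then int (zeta_row k a (j div 2)) else 0)"
proof (cases "a dvd j")
  case True
  then obtain q where q: "j = a * q" ..
  have "a > 0" using assms by (cases a) auto
  then have j_div_a: "j div a = q" using q by simp
  show ?thesis
  proof (cases "even q")
    case True
    then obtain r where r: "q = 2 * r" ..
    then have "j div 2 = a * r" using q by simp
    then have "a dvd j div 2" "j div 2 div a = r" using \<open>a > 0\<close> by simp_all
    then show ?thesis using True \<open>a dvd j\<close> j_div_a r q
      by (simp add: zeta_row_def alpha_minus_half_def)
  next
    case False
    then have "odd j" using q assms by simp
    then show ?thesis using False \<open>a dvd j\<close> j_div_a
      by (simp add: zeta_row_def alpha_minus_half_def)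
  qed
next
  case False
  have "\<not> a dvd j div 2" if "even j"
  proof
    assume "a dvd j div 2"
    then have "a dvd 2 * (j div 2)" by (rule dvd_mult)
    with that False show False by simp
  qed
  with False show ?thesis by (simp add: zeta_row_def)
qed

lemma sum_odd_divisors_alpha_k:
  assumes "j > 0"
  shows "(\<Sum>c | odd c \<and> c dvd j. int (alpha_k k (j div c)))
       = alpha_minus_half k j + alpha_minus_half (Suc k) j"
proof -
  have half: "(\<Sum>d | d dvd j div 2. int (alpha_k k d))
      = int (alpha_k k (j div 2)) + int (alpha_k (Suc k) (j div 2))" if "even j"
    using that assms by (intro alpha_k_add_alpha_k_Suc[symmetric]) auto
  show ?thesis
    using sum_odd_divisors[OF assms, of "\<lambda>d. int (alpha_k k d)"] half
    unfolding alpha_minus_half_def alpha_k_add_alpha_k_Suc[OF assms, symmetric]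
    by auto
qed

text \<open>The \<open>j\<close>-th coefficient of \<open>(zeta(s) - 1)^l Phi(n^-s)\<close>.\<close>
definition subst_coeff :: "nat \<Rightarrow> nat \<Rightarrow> nat \<Rightarrow> int" where
  "subst_coeff l n j = sign2 n * int (zeta_row (l + v2 n) (odd_part n) j)"

lemma subst_coeff_eq_0_if_less:
  assumes "j < 2 ^ l * n"
  shows "subst_coeff l n j = 0"
proof -
  have "2 ^ l * n = 2 ^ (l + v2 n) * odd_part n"
    using odd_part_times_pow2[of n] by (simp add: power_add mult.commute mult.left_commute)
  with assms show ?thesis
    unfolding subst_coeff_def by (simp add: zeta_row_eq_0_if_less)
qed

lemma subst_coeff_odd: "odd c \<Longrightarrow> subst_coeff l c j = int (zeta_row l c j)"
  by (simp add: subst_coeff_def sign2_odd v2_eq_0_if_odd odd_part_eq_self_if_odd)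

lemma subst_coeff_double: "c > 0 \<Longrightarrow> subst_coeff l (2 * c) j = - subst_coeff (Suc l) c j"
  unfolding subst_coeff_def sign2_def by (simp add: v2_double odd_part_double)

lemma subst_coeff_mult:
  assumes "d > 0" "c > 0"
  shows "subst_coeff l (d * c) j
       = sign2 d * (if odd_part d dvd j then subst_coeff (l + v2 d) c (j div odd_part d) else 0)"
  using odd_part_pos[OF assms(1)] unfolding subst_coeff_def
  by (simp add: odd_part_mult[OF assms] v2_mult[OF assms] sign2_mult[OF assms]
      zeta_row_mult add.assoc)

lemma sum_subst_coeff_upto_eq:
  assumes "j < 2 ^ l * Suc M" "j < 2 ^ l * Suc N"
  shows "(\<Sum>c=1..M. subst_coeff l c j) = (\<Sum>c=1..N. subst_coeff l c j)"
proof -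
  have extend: "(\<Sum>c=1..M. subst_coeff l c j) = (\<Sum>c=1..max M N. subst_coeff l c j)"
    if M: "j < 2 ^ l * Suc M" for M N
  proof (rule sum.mono_neutral_left)
    show "\<forall>c\<in>{1..max M N} - {1..M}. subst_coeff l c j = 0"
    proof
      fix c assume "c \<in> {1..max M N} - {1..M}"
      then have "Suc M \<le> c" by auto
      then have "2 ^ l * Suc M \<le> 2 ^ l * c" by (rule mult_le_mono2)
      with M show "subst_coeff l c j = 0" by (intro subst_coeff_eq_0_if_less) simp
    qed
  qed auto
  show ?thesis
    using extend[OF assms(1), of N] extend[OF assms(2), of M] by (simp add: max.commute)
qed

lemma sum_subst_coeff_odd:
  assumes "j > 0"
  shows "(\<Sum>c\<in>{1..j} \<inter> {c. odd c}. subst_coeff l c j)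
       = (\<Sum>c | odd c \<and> c dvd j. int (alpha_k l (j div c)))"
proof -
  have "(\<Sum>c\<in>{1..j} \<inter> {c. odd c}. subst_coeff l c j)
      = (\<Sum>c\<in>{1..j} \<inter> {c. odd c}. if c dvd j then int (alpha_k l (j div c)) else 0)"
    by (rule sum.cong) (auto simp: subst_coeff_odd zeta_row_def)
  also have "\<dots> = (\<Sum>c\<in>{c \<in> {1..j} \<inter> {c. odd c}. c dvd j}. int (alpha_k l (j div c)))"
    by (rule sum.inter_filter[symmetric]) simp
  also have "{c \<in> {1..j} \<inter> {c. odd c}. c dvd j} = {c. odd c \<and> c dvd j}"
    using assms by (auto simp: dvd_imp_le intro: Nat.gr0I)
  finally show ?thesis .
qed

lemma sum_subst_coeff_even:
  "(\<Sum>c\<in>{1..j} - {c. odd c}. subst_coeff l c j) = - (\<Sum>c=1..j. subst_coeff (Suc l) c j)"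
proof -
  have "{1..j} - {c. odd c} = (*) 2 ` {1..j div 2}"
    by (auto elim!: evenE)
  then have "(\<Sum>c\<in>{1..j} - {c. odd c}. subst_coeff l c j)
      = (\<Sum>c=1..j div 2. subst_coeff l (2 * c) j)"
    by (simp add: sum.reindex inj_on_def)
  also have "\<dots> = - (\<Sum>c=1..j div 2. subst_coeff (Suc l) c j)"
    by (simp add: subst_coeff_double sum_negf)
  also have "(\<Sum>c=1..j div 2. subst_coeff (Suc l) c j) = (\<Sum>c=1..j. subst_coeff (Suc l) c j)"
  proof (rule sum_subst_coeff_upto_eq)
    have "j < 2 * Suc (j div 2)" by presburger
    also have "\<dots> \<le> 2 ^ Suc l * Suc (j div 2)" by (intro mult_le_mono1) simp
    finally show "j < 2 ^ Suc l * Suc (j div 2)" .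
    have "j < Suc j" by simp
    also have "\<dots> \<le> 2 ^ Suc l * Suc j"
      using mult_le_mono1[of 1 "2 ^ Suc l" "Suc j"] by simp
    finally show "j < 2 ^ Suc l * Suc j" .
  qed
  finally show ?thesis .
qed

text \<open>Splitting \<open>c\<close> by parity: \<open>Phi(zeta) = eta - (zeta - 1) Phi(zeta)\<close>.\<close>
lemma sum_subst_coeff_step:
  assumes "j > 0"
  shows "(\<Sum>c=1..j. subst_coeff l c j)
       = (\<Sum>c | odd c \<and> c dvd j. int (alpha_k l (j div c))) - (\<Sum>c=1..j. subst_coeff (Suc l) c j)"
proof -
  have "(\<Sum>c=1..j. subst_coeff l c j)
      = (\<Sum>c\<in>{1..j} \<inter> {c. odd c}. subst_coeff l c j)
        + (\<Sum>c\<in>{1..j} - {c. odd c}. subst_coeff l c j)"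
    by (rule sum.Int_Diff) simp
  then show ?thesis
    unfolding sum_subst_coeff_odd[OF assms] sum_subst_coeff_even by simp
qed

text \<open>\<open>Phi(zeta) = 1 - 2^-s\<close>, multiplied by \<open>(zeta - 1)^l\<close>;
  descending induction on \<open>l\<close>, starting where \<open>2^l > j\<close>.\<close>
lemma sum_subst_coeff: "(\<Sum>c=1..j. subst_coeff l c j) = alpha_minus_half l j"
proof (induction "j - l" arbitrary: l)
  case 0
  then have small: "j < 2 ^ l"
    using less_exp[of l] by linarith
  have "subst_coeff l c j = 0" if "c \<in> {1..j}" for c
    using small that by (intro subst_coeff_eq_0_if_less) (simp add: less_le_trans)
  then show ?case
    using small by (simp add: alpha_minus_half_def alpha_k_eq_0_if_less)
next
  case (Suc m)
  then have "j > 0" "m = j - Suc l" by simp_all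
  then show ?case
    using Suc.hyps(1) sum_subst_coeff_step[of j l] sum_odd_divisors_alpha_k[of j l] by simp
qed

text \<open>\<open>Phi(d^-s zeta) = Phi(d^-s) (1 - 2^-s)\<close>.\<close>
lemma sum_subst_coeff_multiples:
  assumes "d > 0"
  shows "(\<Sum>n\<in>{n \<in> {1..j}. d dvd n}. subst_coeff l n j)
       = subst_coeff l d j - (if even j then subst_coeff l d (j div 2) else 0)"
proof -
  define a where "a = odd_part d"
  define L where "L = l + v2 d"
  have "a > 0" "odd a" "a * 2 ^ v2 d = d"
    unfolding a_def using odd_part_pos[OF assms] odd_odd_part[OF assms] odd_part_times_pow2[of d]
    by simp_all
  have cut: "(\<Sum>c=1..j div d. subst_coeff L c (j div a)) = alpha_minus_half L (j div a)"
  proof -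
    have "a * (2 ^ v2 d * Suc (j div d)) = d * Suc (j div d)"
      using \<open>a * 2 ^ v2 d = d\<close> by (metis mult.assoc)
    also have "j < d * Suc (j div d)"
      using assms by (simp add: dividend_less_times_div)
    finally have "j div a < 2 ^ v2 d * Suc (j div d)"
      using \<open>a > 0\<close> by (simp add: div_less_iff_less_mult mult.commute)
    also have "\<dots> \<le> 2 ^ L * Suc (j div d)"
      unfolding L_def by (intro mult_le_mono1) simp
    finally have "j div a < 2 ^ L * Suc (j div d)" .
    moreover have "j div a < 2 ^ L * Suc (j div a)"
      using mult_le_mono1[of 1 "2 ^ L" "Suc (j div a)"] by simp
    ultimately show ?thesis
      using sum_subst_coeff_upto_eq sum_subst_coeff by metis
  qed
  have "(\<Sum>n\<in>{n \<in> {1..j}. d dvd n}. subst_coeff l n j) = (\<Sum>c=1..j div d. subst_coeff l (d * c) j)"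
    by (rule sum_multiples_atLeastAtMost[OF assms])
  also have "\<dots> = sign2 d * (if a dvd j then (\<Sum>c=1..j div d. subst_coeff L c (j div a)) else 0)"
    using assms by (simp add: subst_coeff_mult a_def L_def sum_distrib_left)
  also have "\<dots> = sign2 d * (if a dvd j then alpha_minus_half L (j div a) else 0)"
    unfolding cut ..
  also have "\<dots> = subst_coeff l d j - (if even j then subst_coeff l d (j div 2) else 0)"
    unfolding zeta_row_minus_half[OF \<open>odd a\<close>]
    by (simp add: subst_coeff_def a_def L_def right_diff_distrib)
  finally show ?thesis .
qed

lemma sum_alpha_k_subst_coeff_upto_eq:
  assumes "j \<le> M"
  shows "(\<Sum>n=1..M. int (alpha_k k n) * subst_coeff 0 n j)
       = (\<Sum>n=1..j. int (alpha_k k n) * subst_coeff 0 n j)"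
proof (rule sum.mono_neutral_right)
  show "\<forall>n\<in>{1..M} - {1..j}. int (alpha_k k n) * subst_coeff 0 n j = 0"
    by (auto intro: subst_coeff_eq_0_if_less)
qed (use assms in auto)

lemma sum_subst_coeff_proper_multiples:
  assumes "d \<in> {1..j}"
  shows "(\<Sum>n | n \<in> {1..j} \<and> d dvd n \<and> d < n. subst_coeff 0 n j)
       = - (if even j then subst_coeff 0 d (j div 2) else 0)"
proof -
  have "{n. n \<in> {1..j} \<and> d dvd n \<and> d < n} = {n \<in> {1..j}. d dvd n} - {d}"
    using assms by auto
  moreover have "(\<Sum>n\<in>{n \<in> {1..j}. d dvd n} - {d}. subst_coeff 0 n j)
      = (\<Sum>n\<in>{n \<in> {1..j}. d dvd n}. subst_coeff 0 n j) - subst_coeff 0 d j"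
    using assms sum_diff1[of "{n \<in> {1..j}. d dvd n}" "\<lambda>n. subst_coeff 0 n j" d] by simp
  moreover have "(\<Sum>n\<in>{n \<in> {1..j}. d dvd n}. subst_coeff 0 n j)
      = subst_coeff 0 d j - (if even j then subst_coeff 0 d (j div 2) else 0)"
    using assms by (intro sum_subst_coeff_multiples) simp
  ultimately show ?thesis by simp
qed

lemma sum_alpha_k_Suc_subst_coeff:
  "(\<Sum>n=1..j. int (alpha_k (Suc k) n) * subst_coeff 0 n j)
     = - (if even j then \<Sum>n=1..j div 2. int (alpha_k k n) * subst_coeff 0 n (j div 2) else 0)"
proof -
  have "(\<Sum>n=1..j. int (alpha_k (Suc k) n) * subst_coeff 0 n j)
      = (\<Sum>n=1..j. \<Sum>d | d \<in> {1..j} \<and> d dvd n \<and> d < n. int (alpha_k k d) * subst_coeff 0 n j)"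
  proof (rule sum.cong[OF refl])
    fix n assume "n \<in> {1..j}"
    then have "proper_divisors n = {d. d \<in> {1..j} \<and> d dvd n \<and> d < n}"
      unfolding proper_divisors_def by (auto intro: Nat.gr0I)
    then show "int (alpha_k (Suc k) n) * subst_coeff 0 n j
        = (\<Sum>d | d \<in> {1..j} \<and> d dvd n \<and> d < n. int (alpha_k k d) * subst_coeff 0 n j)"
      by (simp add: alpha_k_Suc of_nat_sum sum_distrib_right)
  qed
  also have "\<dots> = (\<Sum>d=1..j. int (alpha_k k d)
      * (\<Sum>n | n \<in> {1..j} \<and> d dvd n \<and> d < n. subst_coeff 0 n j))"
    unfolding sum_distrib_left by (rule sum.swap_restrict) simp_all
  also have "\<dots> = - (if even j then \<Sum>d=1..j. int (alpha_k k d) * subst_coeff 0 d (j div 2) else 0)"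
  proof -
    have "(\<Sum>n | n \<in> {1..j} \<and> d dvd n \<and> d < n. subst_coeff 0 n j)
        = - (if even j then subst_coeff 0 d (j div 2) else 0)" if "d \<in> {1..j}" for d
      using that by (rule sum_subst_coeff_proper_multiples)
    then show ?thesis by (simp add: sum_negf)
  qed
  also have "\<dots> = - (if even j then \<Sum>n=1..j div 2. int (alpha_k k n) * subst_coeff 0 n (j div 2) else 0)"
    using sum_alpha_k_subst_coeff_upto_eq[of "j div 2" j k] by simp
  finally show ?thesis .
qed

text \<open>\<open>Phi((zeta - 1)^k) = (-2^-s)^k\<close>.\<close>
lemma sum_alpha_k_subst_coeff:
  "(\<Sum>n=1..j. int (alpha_k k n) * subst_coeff 0 n j) = (if j = 2 ^ k then (-1) ^ k else 0)"
proof (induction k arbitrary: j)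
  case 0
  have "(\<Sum>n=1..j. int (alpha_k 0 n) * subst_coeff 0 n j)
      = (\<Sum>n=1..j. if n = 1 then subst_coeff 0 1 j else 0)"
    by (rule sum.cong) (auto simp: alpha_k_0)
  then show ?case by (simp add: subst_coeff_odd zeta_row_def alpha_k_0)
next
  case (Suc k)
  show ?case
  proof (cases "even j")
    case True
    then have "j div 2 = 2 ^ k \<longleftrightarrow> j = 2 ^ Suc k" by auto
    with True show ?thesis
      using sum_alpha_k_Suc_subst_coeff[of k j] Suc.IH[of "j div 2"] by simp
  next
    case False
    then have "j \<noteq> 2 ^ Suc k" by auto
    with False show ?thesis
      using sum_alpha_k_Suc_subst_coeff[of k j] by simp
  qed
qed

lemma sum_zeta_row_subst_coeff:
  assumes "i > 0"
  shows "(\<Sum>m=1..j. int (zeta_row (v2 i) (odd_part i) m) * subst_coeff 0 m j)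
       = (if i = j then sign2 i else 0)"
proof -
  define a where "a = odd_part i"
  define k where "k = v2 i"
  have "a > 0" "odd a" "i = a * 2 ^ k"
    unfolding a_def k_def using odd_part_pos[OF assms] odd_odd_part[OF assms] odd_part_times_pow2[of i]
    by simp_all
  have "(\<Sum>m=1..j. int (zeta_row k a m) * subst_coeff 0 m j)
      = (\<Sum>m\<in>{m \<in> {1..j}. a dvd m}. int (alpha_k k (m div a)) * subst_coeff 0 m j)"
    unfolding sum.inter_filter[OF finite_atLeastAtMost] by (rule sum.cong) (simp_all add: zeta_row_def)
  also have "\<dots> = (\<Sum>n=1..j div a. int (alpha_k k n) * subst_coeff 0 (a * n) j)"
    using sum_multiples_atLeastAtMost[OF \<open>a > 0\<close>,
        of "\<lambda>m. int (alpha_k k (m div a)) * subst_coeff 0 m j"] \<open>a > 0\<close>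
    by simp
  also have "\<dots> = (if a dvd j then \<Sum>n=1..j div a. int (alpha_k k n) * subst_coeff 0 n (j div a) else 0)"
    using \<open>a > 0\<close> \<open>odd a\<close>
    by (auto simp: subst_coeff_mult sign2_odd v2_eq_0_if_odd odd_part_eq_self_if_odd intro!: sum.cong)
  also have "\<dots> = (if a dvd j \<and> j div a = 2 ^ k then (-1) ^ k else 0)"
    by (simp only: sum_alpha_k_subst_coeff) auto
  also have "\<dots> = (if i = j then sign2 i else 0)"
  proof -
    have "a dvd j \<and> j div a = 2 ^ k \<longleftrightarrow> i = j"
      using \<open>a > 0\<close> \<open>i = a * 2 ^ k\<close> by auto
    then show ?thesis by (simp add: sign2_def k_def)
  qed
  finally show ?thesis unfolding a_def k_def .
qed

lemma Zmat_eq_zeta_row: "Zmat i j = of_nat (zeta_row (v2 i) (odd_part i) j)"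
  unfolding Zmat_def zeta_row_def odd_part_def Let_def by simp

lemma Zmat_eq_0_if_less: "j < i \<Longrightarrow> Zmat i j = 0"
  unfolding Zmat_eq_zeta_row
  using zeta_row_eq_0_if_less[of j "v2 i" "odd_part i"] odd_part_times_pow2[of i]
  by (simp add: mult.commute)

lemma norm_Zmat_le: "cmod (Zmat i j) \<le> real j ^ 2"
proof -
  have "real (zeta_row k d j) \<le> real j ^ 2" for k d
  proof -
    have "real (alpha_k k (j div d)) \<le> real (j div d) ^ 2" by (rule alpha_k_le_square)
    also have "\<dots> \<le> real j ^ 2" by (simp add: power_mono div_le_dividend)
    finally show ?thesis by (simp add: zeta_row_def)
  qed
  then show ?thesis by (simp add: Zmat_eq_zeta_row)
qed

lemma mmult_Xmat_left: "i \<ge> 1 \<Longrightarrow> (Xmat \<odot> A) i j = of_int (sign2 i) * A i j"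
  unfolding mmult_def
  by (subst infsum_cong_neutral[where T = "{i}"]) (auto simp: Xmat_def sign2_def)

lemma mmult_Xmat_right: "j \<ge> 1 \<Longrightarrow> (A \<odot> Xmat) i j = A i j * of_int (sign2 j)"
  unfolding mmult_def
  by (subst infsum_cong_neutral[where T = "{j}"]) (auto simp: Xmat_def sign2_def)

lemma XZX_entry:
  "i \<ge> 1 \<Longrightarrow> j \<ge> 1 \<Longrightarrow>
     (Xmat \<odot> Zmat \<odot> Xmat) i j = of_int (sign2 i) * Zmat i j * of_int (sign2 j)"
  by (simp add: mmult_Xmat_left mmult_Xmat_right)

lemma mmult_eq_sum_upto:
  assumes "\<And>m. j < m \<Longrightarrow> B m j = 0"
  shows "(A \<odot> B) i j = (\<Sum>m=1..j. A i m * B m j)"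
  unfolding mmult_def
  by (subst infsum_cong_neutral[where T = "{1..j}"]) (auto simp: assms)

lemma sum_Zmat_sign2_Zmat:
  assumes "i \<ge> 1"
  shows "(\<Sum>m=1..j. Zmat i m * of_int (sign2 m) * Zmat m j) = (if i = j then of_int (sign2 i) else 0)"
proof -
  have "(\<Sum>m=1..j. Zmat i m * of_int (sign2 m) * Zmat m j)
      = of_int (\<Sum>m=1..j. int (zeta_row (v2 i) (odd_part i) m) * subst_coeff 0 m j)"
    by (simp add: Zmat_eq_zeta_row subst_coeff_def mult.assoc)
  also have "\<dots> = of_int (if i = j then sign2 i else 0)"
    using assms by (subst sum_zeta_row_subst_coeff) simp_all
  finally show ?thesis by simp
qed

lemma Zmat_mmult_XZX: "mat_eq (Zmat \<odot> (Xmat \<odot> Zmat \<odot> Xmat)) Imat"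
  unfolding mat_eq_def
proof (intro allI impI)
  fix i j :: nat assume "i \<ge> 1" "j \<ge> 1"
  have "(Zmat \<odot> (Xmat \<odot> Zmat \<odot> Xmat)) i j
      = (\<Sum>m=1..j. Zmat i m * (of_int (sign2 m) * Zmat m j * of_int (sign2 j)))"
    using \<open>j \<ge> 1\<close> by (simp add: mmult_eq_sum_upto XZX_entry Zmat_eq_0_if_less)
  also have "\<dots> = (\<Sum>m=1..j. Zmat i m * of_int (sign2 m) * Zmat m j) * of_int (sign2 j)"
    by (simp add: sum_distrib_right mult.assoc)
  also have "\<dots> = Imat i j"
    unfolding sum_Zmat_sign2_Zmat[OF \<open>i \<ge> 1\<close>] by (simp add: Imat_def of_int_sign2_square)
  finally show "(Zmat \<odot> (Xmat \<odot> Zmat \<odot> Xmat)) i j = Imat i j" .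
qed

lemma XZX_mmult_Zmat: "mat_eq ((Xmat \<odot> Zmat \<odot> Xmat) \<odot> Zmat) Imat"
  unfolding mat_eq_def
proof (intro allI impI)
  fix i j :: nat assume "i \<ge> 1" "j \<ge> 1"
  have "((Xmat \<odot> Zmat \<odot> Xmat) \<odot> Zmat) i j
      = (\<Sum>m=1..j. of_int (sign2 i) * Zmat i m * of_int (sign2 m) * Zmat m j)"
    using \<open>i \<ge> 1\<close> by (simp add: mmult_eq_sum_upto XZX_entry Zmat_eq_0_if_less)
  also have "\<dots> = of_int (sign2 i) * (\<Sum>m=1..j. Zmat i m * of_int (sign2 m) * Zmat m j)"
    by (simp add: sum_distrib_left mult.assoc)
  also have "\<dots> = Imat i j"
    unfolding sum_Zmat_sign2_Zmat[OF \<open>i \<ge> 1\<close>] by (simp add: Imat_def of_int_sign2_square)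
  finally show "((Xmat \<odot> Zmat \<odot> Xmat) \<odot> Zmat) i j = Imat i j" .
qed

lemma XZX_in_DR0: "Xmat \<odot> Zmat \<odot> Xmat \<in> DR0"
proof -
  have "(Xmat \<odot> Zmat \<odot> Xmat) i j = 0" if "i \<ge> 1" "j \<ge> 1" "real i > real j powr 2" for i j
  proof -
    have "real j \<le> real j powr 2"
      using that(2) by (simp add: powr_realpow power2_eq_square)
    with that show ?thesis by (simp add: XZX_entry Zmat_eq_0_if_less)
  qed
  moreover have "cmod ((Xmat \<odot> Zmat \<odot> Xmat) i j) \<le> real j powr 2" if "i \<ge> 1" "j \<ge> 1" for i j
    using that norm_Zmat_le[of i j]
    by (simp add: XZX_entry norm_mult powr_realpow abs_sign2 flip: of_int_abs)
  ultimately show ?thesis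
    unfolding DR0_def by (intro CollectI exI[of _ 1] exI[of _ 2]) simp
qed

theorem theorem4p6:
  shows "mat_eq (Zmat \<odot> (Xmat \<odot> Zmat \<odot> Xmat)) Imat
       \<and> mat_eq ((Xmat \<odot> Zmat \<odot> Xmat) \<odot> Zmat) Imat
       \<and> (Xmat \<odot> Zmat \<odot> Xmat) \<in> DR0"
  using Zmat_mmult_XZX XZX_mmult_Zmat XZX_in_DR0 by blast

end
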